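(* In the category $\mathbb{T}_\alpha$, the socle of $V^*$ is $V_*=V^*_{\aleph_0}$, and for every infinite cardinal $\beta\le\alpha$ the socle of $V^*/V^*_\beta$ is $V^*_{\beta^+}/V^*_\beta$, which is a simple module. Consequently the transfinite socle filtration of $V^*$ is the chain $0\subset V^*_{\aleph_0}\subset\cdots\subset V^*_\beta\subset\cdots\subset V^*_\alpha\subset V^*$ of subspaces $V^*_\beta$, $\beta$ ranging over infinite cardinals $\le\alpha^+$.
   Context: $\mathbb{K}$ is an algebraically closed field of characteristic $0$, $\alpha$ an infinite cardinal, $\beta^+$ the successor cardinal. $V,V_*$ are $\alpha$-dimensional with a nondegenerate pairing $\mathbf{p}:V_*\otimes V\to\mathbb{K}$ admitting dual bases indexed by $\Sigma$, $|\Sigma|=\alpha$. Elements of $V^*=\operatorname{Hom}(V,\mathbb{K})$ are $\Sigma$-indexed row vectors, $V_*$ the finitely supported ones; for an infinite cardinal $\beta\le\alpha^+$, $V^*_\beta$ is the subspace of row vectors with fewer than $\beta$ nonzero entries ($V^*_{\alpha^+}=V^*$). $\mathfrak{gl}^M=\{x\in\operatorname{End}(V_* ):x^*(V)\subseteq V\}$ (matrices with finitely many nonzero entries in each row and column) acts on $V$ by left multiplication and on $V^*$ by $g\cdot v=-vg$. $\mathbb{T}_\alpha$ is the smallest full monoidal subcategory of $\mathfrak{gl}^M$-mod containing $V$ and $V^*$ and closed under subquotients. The transfinite socle filtration of $X$ is defined by $\operatorname{soc}^1X=\operatorname{soc}X$, $\operatorname{soc}^{b+1}X$ the preimage in $X$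 of $\operatorname{soc}(X/\operatorname{soc}^bX)$, and at limit ordinals the union of the previous terms. *)

theory Defs
  imports Main "HOL-Computational_Algebra.Polynomial"
begin

definition alg_closed :: "'k::field itself \<Rightarrow> bool" where
  "alg_closed _ \<longleftrightarrow> (\<forall>p :: 'k poly. 0 < degree p \<longrightarrow> (\<exists>x. poly p x = 0))"

text \<open>Elements of V^* are Sigma-indexed row vectors, i.e. functions 's => 'k.
  glM: Sigma x Sigma matrices with finitely many nonzero entries in each row and column.\<close>
definition glM :: "('s \<Rightarrow> 's \<Rightarrow> 'k::field) set" where
  "glM = {g. (\<forall>i. finite {j. g i j \<noteq> 0}) \<and> (\<forall>j. finite {i. g i j \<noteq> 0})}"

definition act :: "('s \<Rightarrow> 's \<Rightarrow> 'k::field) \<Rightarrow> ('s \<Rightarrow> 'k) \<Rightarrow> ('s \<Rightarrow> 'k)" where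
  "act g v = (\<lambda>j. - (\<Sum>i\<in>{i. g i j \<noteq> 0}. v i * g i j))"

definition submod :: "('s \<Rightarrow> 'k::field) set \<Rightarrow> bool" where
  "submod M \<longleftrightarrow> (\<lambda>_. 0) \<in> M
     \<and> (\<forall>u\<in>M. \<forall>v\<in>M. (\<lambda>i. u i + v i) \<in> M)
     \<and> (\<forall>c. \<forall>v\<in>M. (\<lambda>i. c * v i) \<in> M)
     \<and> (\<forall>g\<in>glM. \<forall>v\<in>M. act g v \<in> M)"

text \<open>M/W is a simple module (W, M submodules of V^*, W a proper submodule of M
  with nothing strictly in between).\<close>
definition rel_simple :: "('s \<Rightarrow> 'k::field) set \<Rightarrow> ('s \<Rightarrow> 'k) set \<Rightarrow> bool" where
  "rel_simple W M \<longleftrightarrow> submod W \<and> submod M \<and> W \<subset> M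
     \<and> (\<forall>N. submod N \<and> W \<subseteq> N \<and> N \<subseteq> M \<longrightarrow> N = W \<or> N = M)"

text \<open>Preimage in V^* of the socle of V^*/W: the sum of W and all submodules M
  with M/W simple (the smallest submodule containing them).\<close>
definition soc_pre :: "('s \<Rightarrow> 'k::field) set \<Rightarrow> ('s \<Rightarrow> 'k) set" where
  "soc_pre W = \<Inter> {N. submod N \<and> W \<subseteq> N \<and> (\<forall>M. rel_simple W M \<longrightarrow> M \<subseteq> N)}"

text \<open>Terms soc^b V^* (b \<ge> 1) of the transfinite socle filtration of V^*:
  generated from soc^1 by successor steps and unions (limit steps).\<close>
inductive_set soc_filt :: "('s \<Rightarrow> 'k::field) set set" where
  base: "soc_pre {\<lambda>_. 0} \<in> soc_filt"
| succ: "X \<in> soc_filt \<Longrightarrow> soc_pre X \<in> soc_filt"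
| lim: "S \<noteq> {} \<Longrightarrow> \<forall>X\<in>S. X \<in> soc_filt \<Longrightarrow> \<Union> S \<in> soc_filt"

definition Vstar :: "'c rel \<Rightarrow> ('s \<Rightarrow> 'k::field) set" where
  "Vstar \<beta> = {v. (card_of {i. v i \<noteq> 0}, \<beta>) \<in> ordLess}"

definition inf_card :: "'c rel \<Rightarrow> bool" where
  "inf_card \<beta> \<longleftrightarrow> Card_order \<beta> \<and> infinite (Field \<beta>)"

end

(*
  A matrix in glM with finitely many nonzero entries in each row and column can move the support
  of a vector onto any set of at most the same cardinality, and onto any finite set.  Hence every
  submodule of V^* is closed under passing to vectors of no larger support, the nonzero submodules
  are exactly the V^*_beta, and they form a chain.  Above V^*_beta the least submodule is therefore
  V^*_beta+, which yields the socles, and the socle filtration climbs through all V^*_beta, taking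
  unions at limit cardinals.
*)
theory Submission
  imports Defs
begin

unbundle cardinal_syntax

section \<open>Submodules and supports\<close>

definition supp :: "('s \<Rightarrow> 'k::field) \<Rightarrow> 's set" where
  "supp v = {i. v i \<noteq> 0}"

definition Vfin :: "('s \<Rightarrow> 'k::field) set" where
  "Vfin = {v. finite (supp v)}"

definition supp_card_closed :: "('s \<Rightarrow> 'k::field) set \<Rightarrow> bool" where
  "supp_card_closed U \<longleftrightarrow> (\<forall>v\<in>U. \<forall>w. |supp w| \<le>o |supp v| \<longrightarrow> w \<in> U)"

lemma ex_supp_eq: "\<exists>v :: 's \<Rightarrow> 'k::field. supp v = A"
  by (rule exI[of _ "\<lambda>i. if i \<in> A then 1 else 0"]) (auto simp: supp_def)

lemma supp_act_subset:
  assumes "g \<in> glM"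
  shows "supp (act g v) \<subseteq> (\<Union>i\<in>supp v. {j. g i j \<noteq> 0})"
proof
  fix j assume "j \<in> supp (act g v)"
  hence "(\<Sum>i\<in>{i. g i j \<noteq> 0}. v i * g i j) \<noteq> 0" by (simp add: supp_def act_def)
  then obtain i where "i \<in> {i. g i j \<noteq> 0}" "v i * g i j \<noteq> 0"
    by (rule sum.not_neutral_contains_not_neutral)
  thus "j \<in> (\<Union>i\<in>supp v. {j. g i j \<noteq> 0})" by (auto simp: supp_def)
qed

text \<open>The matrix with entry \<open>w j / v (\<tau> j)\<close> at \<open>(\<tau> j, j)\<close> and zeros elsewhere lies in
  \<open>glM\<close> because the fibres of \<open>\<tau>\<close> are finite, and it maps \<open>v\<close> to \<open>-w\<close>.\<close>
lemma mem_submod_of_supp_map: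
  fixes v w :: "'s \<Rightarrow> 'k::field"
  assumes M: "submod M" and v: "v \<in> M"
    and \<tau>: "\<forall>j\<in>supp w. \<tau> j \<in> supp v"
    and fibres: "\<forall>i. finite {j\<in>supp w. \<tau> j = i}"
  shows "w \<in> M"
proof -
  define g where "g = (\<lambda>i j. if j \<in> supp w \<and> \<tau> j = i then w j / v i else 0)"
  have col: "{i. g i j \<noteq> 0} = (if j \<in> supp w then {\<tau> j} else {})" for j
    using \<tau> by (auto simp: g_def supp_def)
  have "{j. g i j \<noteq> 0} \<subseteq> {j\<in>supp w. \<tau> j = i}" for i
    by (auto simp: g_def split: if_splits)
  hence "finite {j. g i j \<noteq> 0}" for i using fibres finite_subset by blast
  hence "g \<in> glM" unfolding glM_def using col by auto
  hence "act g v \<in> M" using M v by (auto simp: submod_def)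
  moreover have "act g v = (\<lambda>j. - w j)"
  proof
    fix j show "act g v j = - w j"
    proof (cases "j \<in> supp w")
      case True
      with \<tau> have "v (\<tau> j) \<noteq> 0" by (auto simp: supp_def)
      moreover have "act g v j = - (v (\<tau> j) * g (\<tau> j) j)" by (simp add: act_def col True)
      ultimately show ?thesis using True by (simp add: g_def)
    next
      case False thus ?thesis by (simp add: act_def col supp_def)
    qed
  qed
  ultimately have neg: "(\<lambda>j. - w j) \<in> M" by simp
  have "\<forall>c. \<forall>u\<in>M. (\<lambda>i. c * u i) \<in> M" using M by (simp add: submod_def)
  from this[rule_format, OF neg, of "-1"] show ?thesis by simp
qed

lemma mem_submod_of_card_supp_le:
  fixes v w :: "'s \<Rightarrow> 'k::field"
  assumes "submod M" "v \<in> M" "|supp w| \<le>o |supp v|"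
  shows "w \<in> M"
proof -
  obtain f where f: "inj_on f (supp w)" "f ` supp w \<subseteq> supp v"
    using assms(3) card_of_ordLeq[of "supp w" "supp v"] by blast
  have "{j\<in>supp w. f j = i} = f -` {i} \<inter> supp w" for i by auto
  hence "\<forall>i. finite {j\<in>supp w. f j = i}" using finite_vimage_IntI[OF _ f(1)] by simp
  with f show ?thesis by (intro mem_submod_of_supp_map[OF assms(1,2)]) auto
qed

lemma mem_submod_of_finite_supp:
  fixes v w :: "'s \<Rightarrow> 'k::field"
  assumes "submod M" "v \<in> M" "v \<noteq> (\<lambda>_. 0)" "finite (supp w)"
  shows "w \<in> M"
proof -
  obtain i0 where "v i0 \<noteq> 0" using assms(3) by auto
  with assms show ?thesis
    by (intro mem_submod_of_supp_map[of M v w "\<lambda>_. i0"]) (auto simp: supp_def)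
qed

lemma submod_supp_card_closed: "submod M \<Longrightarrow> supp_card_closed M"
  unfolding supp_card_closed_def using mem_submod_of_card_supp_le by blast

lemma Vstar_eq: "Vstar \<beta> = {v. |supp v| <o \<beta>}"
  by (simp add: Vstar_def supp_def)

lemma Vstar_cardSuc: "Card_order \<beta> \<Longrightarrow> Vstar (cardSuc \<beta>) = {v. |supp v| \<le>o \<beta>}"
  unfolding Vstar_eq by (simp add: cardSuc_ordLeq_ordLess card_of_Card_order)

lemma Vstar_ordIso_cong: "\<beta> =o \<beta>' \<Longrightarrow> Vstar \<beta> = Vstar \<beta>'"
  unfolding Vstar_eq by (metis ordLess_ordIso_trans ordIso_symmetric)

lemma supp_card_closed_Vstar: "supp_card_closed (Vstar \<beta>)"
  unfolding supp_card_closed_def Vstar_eq using ordLeq_ordLess_trans by blast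

lemma Vfin_subset_Vstar:
  assumes "Card_order \<beta>" "infinite (Field \<beta>)"
  shows "Vfin \<subseteq> Vstar \<beta>"
proof
  fix v :: "'s \<Rightarrow> 'k::field" assume "v \<in> Vfin"
  hence "|supp v| <o \<beta>" unfolding Vfin_def
    using assms by (intro finite_ordLess_infinite card_of_Well_order card_order_on_well_order_on)
      (auto simp: Field_card_of)
  thus "v \<in> Vstar \<beta>" by (simp add: Vstar_eq)
qed

lemma supp_act_finite_or_card_le:
  assumes "g \<in> glM"
  shows "finite (supp (act g v)) \<or> |supp (act g v)| \<le>o |supp v|"
proof -
  have rows: "finite {j. g i j \<noteq> 0}" for i using assms by (simp add: glM_def)
  have "finite (\<Union>i\<in>supp v. {j. g i j \<noteq> 0}) \<or> |\<Union>i\<in>supp v. {j. g i j \<noteq> 0}| \<le>o |supp v|"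
  proof (cases "finite (supp v)")
    case False
    have "|{j. g i j \<noteq> 0}| \<le>o |supp v|" for i
      using rows False
      by (intro ordLess_imp_ordLeq finite_ordLess_infinite card_of_Well_order)
        (auto simp: Field_card_of)
    thus ?thesis using False
      by (intro disjI2 card_of_UNION_ordLeq_infinite) (auto simp: card_of_refl ordIso_imp_ordLeq)
  qed (use rows in auto)
  thus ?thesis using supp_act_subset[OF assms, of v]
    by (meson card_of_mono1 finite_subset ordLeq_transitive)
qed

lemma submod_Vstar:
  assumes \<beta>: "Card_order \<beta>" "infinite (Field \<beta>)"
  shows "submod (Vstar \<beta> :: ('s \<Rightarrow> 'k::field) set)"
proof -
  have fin: "v \<in> Vstar \<beta>" if "finite (supp v)" for v :: "'s \<Rightarrow> 'k"
    using Vfin_subset_Vstar[OF \<beta>] that by (auto simp: Vfin_def)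
  have closed: "w \<in> Vstar \<beta>" if "v \<in> Vstar \<beta>" "supp w \<subseteq> supp v" for v w :: "'s \<Rightarrow> 'k"
    using supp_card_closed_Vstar that card_of_mono1 unfolding supp_card_closed_def by blast
  show ?thesis unfolding submod_def
  proof (intro conjI ballI allI)
    show "(\<lambda>_::'s. 0 :: 'k) \<in> Vstar \<beta>" by (rule fin) (simp add: supp_def)
  next
    fix u v :: "'s \<Rightarrow> 'k" assume "u \<in> Vstar \<beta>" "v \<in> Vstar \<beta>"
    hence "|supp u \<union> supp v| <o \<beta>"
      using card_of_Un_ordLess_infinite_Field[OF \<beta>(2,1)] by (simp add: Vstar_eq)
    moreover have "supp (\<lambda>i. u i + v i) \<subseteq> supp u \<union> supp v" by (auto simp: supp_def)
    ultimately show "(\<lambda>i. u i + v i) \<in> Vstar \<beta>"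
      unfolding Vstar_eq by (meson card_of_mono1 mem_Collect_eq ordLeq_ordLess_trans)
  next
    fix c and v :: "'s \<Rightarrow> 'k" assume "v \<in> Vstar \<beta>"
    thus "(\<lambda>i. c * v i) \<in> Vstar \<beta>" by (rule closed) (auto simp: supp_def)
  next
    fix g :: "'s \<Rightarrow> 's \<Rightarrow> 'k" and v :: "'s \<Rightarrow> 'k" assume "g \<in> glM" "v \<in> Vstar \<beta>"
    thus "act g v \<in> Vstar \<beta>"
      using supp_act_finite_or_card_le fin supp_card_closed_Vstar
      unfolding supp_card_closed_def by blast
  qed
qed

section \<open>Socles of the quotients\<close>

lemma submod_Inter: "\<forall>N\<in>S. submod N \<Longrightarrow> submod (\<Inter>S)"
  by (simp add: submod_def)

lemma subset_soc_pre: "W \<subseteq> soc_pre W"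
  unfolding soc_pre_def by blast

lemma submod_soc_pre: "submod (soc_pre W)"
  unfolding soc_pre_def by (rule submod_Inter) blast

text \<open>If every submodule reaching outside \<open>W\<close> already contains \<open>R\<close>, then \<open>R/W\<close> is the unique
  simple submodule of the quotient, hence its socle.\<close>
lemma soc_pre_eq_if_minimal:
  assumes W: "submod W" and R: "submod R" "W \<subset> R"
    and minimal: "\<And>N v. submod N \<Longrightarrow> v \<in> N \<Longrightarrow> v \<notin> W \<Longrightarrow> R \<subseteq> N"
  shows "soc_pre W = R \<and> rel_simple W R"
proof -
  have simple: "rel_simple W R"
    unfolding rel_simple_def
  proof (intro conjI allI impI W R)
    fix N assume N: "submod N \<and> W \<subseteq> N \<and> N \<subseteq> R"
    show "N = W \<or> N = R"
    proof (cases "N \<subseteq> W")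
      case False
      then obtain v where "v \<in> N" "v \<notin> W" by blast
      with N minimal have "R \<subseteq> N" by blast
      with N show ?thesis by blast
    qed (use N in blast)
  qed
  have "M \<subseteq> R" if M: "rel_simple W M" for M
  proof -
    obtain v where "v \<in> M" "v \<notin> W" using M unfolding rel_simple_def by blast
    hence "R \<subseteq> M" using M minimal unfolding rel_simple_def by blast
    thus ?thesis using M R unfolding rel_simple_def by blast
  qed
  hence "soc_pre W \<subseteq> R" unfolding soc_pre_def using R by (intro Inter_lower) blast
  moreover have "R \<subseteq> soc_pre W" unfolding soc_pre_def using simple by blast
  ultimately show ?thesis using simple by blast
qed

lemma submod_zero: "submod {\<lambda>_::'s. 0::'k::field}"
  by (simp add: submod_def act_def)

lemma submod_Vfin: "submod (Vfin :: ('s \<Rightarrow> 'k::field) set)"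
proof -
  have "Vfin = (Vstar natLeq :: ('s \<Rightarrow> 'k) set)"
    by (simp add: Vfin_def Vstar_eq finite_iff_ordLess_natLeq)
  moreover have "submod (Vstar natLeq :: ('s \<Rightarrow> 'k) set)"
    by (rule submod_Vstar[OF natLeq_Card_order]) (simp add: Field_natLeq)
  ultimately show ?thesis by simp
qed

lemma soc_pre_zero:
  "soc_pre {\<lambda>_::'s. 0::'k::field} = Vfin \<and> rel_simple {\<lambda>_::'s. 0::'k} Vfin"
proof (rule soc_pre_eq_if_minimal)
  show "submod {\<lambda>_::'s. 0::'k}" by (rule submod_zero)
  show "submod (Vfin :: ('s \<Rightarrow> 'k) set)" by (rule submod_Vfin)
  obtain e :: "'s \<Rightarrow> 'k" where e: "supp e = {undefined}" using ex_supp_eq[of "{undefined}"] by (elim exE)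
  hence "e \<in> Vfin" by (simp add: Vfin_def)
  moreover have "e \<notin> {\<lambda>_. 0}" using e by (auto simp: supp_def)
  moreover have "{\<lambda>_. 0} \<subseteq> (Vfin :: ('s \<Rightarrow> 'k) set)" by (simp add: Vfin_def supp_def)
  ultimately show "{\<lambda>_. 0} \<subset> (Vfin :: ('s \<Rightarrow> 'k) set)" by blast
next
  fix N and v :: "'s \<Rightarrow> 'k" assume "submod N" "v \<in> N" "v \<notin> {\<lambda>_. 0}"
  thus "Vfin \<subseteq> N" using mem_submod_of_finite_supp[of N v] unfolding Vfin_def by blast
qed

lemma soc_pre_Vstar_card_of:
  fixes B :: "'s set"
  assumes B: "infinite B"
  shows "soc_pre (Vstar |B| :: ('s \<Rightarrow> 'k::field) set) = Vstar (cardSuc |B| )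
    \<and> rel_simple (Vstar |B| :: ('s \<Rightarrow> 'k) set) (Vstar (cardSuc |B| ))"
proof (rule soc_pre_eq_if_minimal)
  show "submod (Vstar |B| :: ('s \<Rightarrow> 'k) set)"
    using B by (intro submod_Vstar card_of_Card_order) (simp add: Field_card_of)
  show "submod (Vstar (cardSuc |B| ) :: ('s \<Rightarrow> 'k) set)"
    using B by (intro submod_Vstar cardSuc_Card_order card_of_Card_order)
      (simp add: cardSuc_finite[OF card_of_Card_order] Field_card_of)
  obtain w :: "'s \<Rightarrow> 'k" where w: "supp w = B" using ex_supp_eq[of B] by (elim exE)
  have "w \<in> Vstar (cardSuc |B| )"
    by (simp add: Vstar_cardSuc[OF card_of_Card_order] w ordLeq_refl[OF card_of_Card_order])
  moreover have "w \<notin> Vstar |B|" by (simp add: Vstar_eq w ordLess_irreflexive)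
  moreover have "Vstar |B| \<subseteq> (Vstar (cardSuc |B| ) :: ('s \<Rightarrow> 'k) set)"
    unfolding Vstar_cardSuc[OF card_of_Card_order] by (auto simp: Vstar_eq ordLess_imp_ordLeq)
  ultimately show "Vstar |B| \<subset> (Vstar (cardSuc |B| ) :: ('s \<Rightarrow> 'k) set)" by blast
next
  fix N and v :: "'s \<Rightarrow> 'k" assume N: "submod N" "v \<in> N" "v \<notin> Vstar |B|"
  hence "|B| \<le>o |supp v|"
    using ordLess_or_ordLeq[OF card_of_Well_order card_of_Well_order] by (auto simp: Vstar_eq)
  thus "Vstar (cardSuc |B| ) \<subseteq> N"
    unfolding Vstar_cardSuc[OF card_of_Card_order]
    using mem_submod_of_card_supp_le[OF N(1,2)] ordLeq_transitive by blast
qed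

lemma soc_pre_Vstar:
  fixes \<beta> :: "'c rel"
  assumes \<beta>: "Card_order \<beta>" "infinite (Field \<beta>)" "\<beta> \<le>o |UNIV :: 's set|"
  shows "soc_pre (Vstar \<beta> :: ('s \<Rightarrow> 'k::field) set) = Vstar (cardSuc \<beta>)
    \<and> rel_simple (Vstar \<beta> :: ('s \<Rightarrow> 'k) set) (Vstar (cardSuc \<beta>))"
proof -
  have "|Field \<beta>| \<le>o |UNIV :: 's set|"
    by (rule ordIso_ordLeq_trans[OF card_of_Field_ordIso[OF \<beta>(1)] \<beta>(3)])
  then obtain B :: "'s set" where "|Field \<beta>| =o |B|"
    using internalize_card_of_ordLeq2[of "Field \<beta>" "UNIV :: 's set"] by blast
  hence B: "\<beta> =o |B|"
    by (rule ordIso_transitive[OF ordIso_symmetric[OF card_of_Field_ordIso[OF \<beta>(1)]]])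
  have "infinite B" using card_of_ordIso_finite_Field[OF \<beta>(1) B] \<beta>(2) by simp
  moreover have "Vstar \<beta> = (Vstar |B| :: ('s \<Rightarrow> 'k) set)" by (rule Vstar_ordIso_cong[OF B])
  moreover have "Vstar (cardSuc \<beta>) = (Vstar (cardSuc |B| ) :: ('s \<Rightarrow> 'k) set)"
    using B by (intro Vstar_ordIso_cong) (simp add: cardSuc_invar_ordIso[OF \<beta>(1) card_of_Card_order])
  ultimately show ?thesis using soc_pre_Vstar_card_of[where 'k='k] by simp
qed

section \<open>The socle filtration\<close>

definition Vstar_range :: "('s \<Rightarrow> 'k::field) set set" where
  "Vstar_range = {Vstar \<beta> | \<beta> :: 's set rel. inf_card \<beta> \<and> \<beta> \<le>o cardSuc |UNIV :: 's set|}"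

lemma supp_card_closed_Union: "\<forall>U\<in>S. supp_card_closed U \<Longrightarrow> supp_card_closed (\<Union>S)"
  unfolding supp_card_closed_def by blast

lemma supp_card_closed_eq_Vstar:
  assumes closed: "supp_card_closed U" and "U \<noteq> UNIV"
  obtains w0 where "w0 \<notin> U" "U = Vstar |supp w0|"
proof -
  let ?R = "{ |supp w| | w. w \<notin> U}"
  have "?R \<noteq> {}" "\<forall>r\<in>?R. Well_order r" using assms(2) card_of_Well_order by blast+
  then obtain r0 where "r0 \<in> ?R" and least: "\<forall>r\<in>?R. r0 \<le>o r"
    using exists_minim_Well_order[of ?R] by blast
  then obtain w0 where w0: "w0 \<notin> U" "r0 = |supp w0|" by blast
  have "v \<in> U \<longleftrightarrow> |supp v| <o |supp w0|" for v
  proof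
    assume "v \<in> U"
    hence "\<not> |supp w0| \<le>o |supp v|" using closed w0(1) unfolding supp_card_closed_def by blast
    thus "|supp v| <o |supp w0|"
      using ordLess_or_ordLeq[OF card_of_Well_order card_of_Well_order] by blast
  next
    assume "|supp v| <o |supp w0|"
    thus "v \<in> U" using least w0(2) not_ordLess_ordLeq by blast
  qed
  hence "U = Vstar |supp w0|" by (auto simp: Vstar_eq)
  with w0(1) show thesis by (rule that)
qed

text \<open>The singletons carry \<open>|A|\<close> over to a cardinal on \<open>'s set\<close>, the index type of \<open>Vstar_range\<close>.\<close>
lemma Vstar_card_of_in_Vstar_range:
  fixes A :: "'s set"
  assumes "infinite A"
  shows "(Vstar |A| :: ('s \<Rightarrow> 'k::field) set) \<in> Vstar_range"
proof -
  let ?A' = "(\<lambda>i. {i}) ` A"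
  have "bij_betw (\<lambda>i. {i}) A ?A'" by (simp add: bij_betw_def inj_on_def)
  hence iso: "|A| =o |?A'|" by (rule card_of_ordIso[THEN iffD1, OF exI])
  have "infinite ?A'" using assms by (simp add: finite_image_iff inj_on_def)
  moreover have "|?A'| \<le>o cardSuc |UNIV :: 's set|"
    using card_of_image ordLeq_transitive[OF card_of_mono1[OF subset_UNIV]
        cardSuc_ordLeq[OF card_of_Card_order]]
    by (rule ordLeq_transitive)
  moreover have "(Vstar |A| :: ('s \<Rightarrow> 'k) set) = Vstar |?A'|"
    by (rule Vstar_ordIso_cong[OF iso])
  ultimately show ?thesis unfolding Vstar_range_def inf_card_def
    by (intro CollectI exI[of _ "|?A'|"]) (simp add: card_of_card_order_on Field_card_of)
qed

lemma Vstar_range_iff: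
  assumes "infinite (UNIV :: 's set)"
  shows "U \<in> (Vstar_range :: ('s \<Rightarrow> 'k::field) set set) \<longleftrightarrow> Vfin \<subseteq> U \<and> supp_card_closed U"
proof
  assume "U \<in> Vstar_range"
  thus "Vfin \<subseteq> U \<and> supp_card_closed U"
    unfolding Vstar_range_def inf_card_def using Vfin_subset_Vstar supp_card_closed_Vstar by blast
next
  assume U: "Vfin \<subseteq> U \<and> supp_card_closed U"
  show "U \<in> Vstar_range"
  proof (cases "U = UNIV")
    case True
    let ?\<beta> = "cardSuc |UNIV :: 's set|"
    have "inf_card ?\<beta>" unfolding inf_card_def
      using assms cardSuc_Card_order[OF card_of_Card_order, of "UNIV :: 's set"]
        cardSuc_finite[OF card_of_Card_order, of "UNIV :: 's set"]
      by (simp add: Field_card_of)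
    moreover have "(Vstar ?\<beta> :: ('s \<Rightarrow> 'k) set) = UNIV"
      by (simp add: Vstar_cardSuc[OF card_of_Card_order] card_of_mono1)
    ultimately show ?thesis unfolding Vstar_range_def True
      using ordLeq_refl[OF cardSuc_Card_order[OF card_of_Card_order]] by blast
  next
    case False
    then obtain w0 where "w0 \<notin> U" "U = Vstar |supp w0|"
      using U supp_card_closed_eq_Vstar by blast
    moreover have "infinite (supp w0)" using U \<open>w0 \<notin> U\<close> by (auto simp: Vfin_def)
    ultimately show ?thesis using Vstar_card_of_in_Vstar_range by metis
  qed
qed

lemma submod_in_Vstar_range:
  assumes "infinite (UNIV :: 's set)" "submod U" "Vfin \<subseteq> U"
  shows "U \<in> (Vstar_range :: ('s \<Rightarrow> 'k::field) set set)"
  using assms Vstar_range_iff submod_supp_card_closed by blast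

lemma soc_filt_subset_Vstar_range:
  assumes inf: "infinite (UNIV :: 's set)"
  shows "X \<in> (soc_filt :: ('s \<Rightarrow> 'k::field) set set) \<Longrightarrow> X \<in> Vstar_range"
proof (induction X rule: soc_filt.induct)
  case base
  show ?case
    using submod_in_Vstar_range[OF inf submod_Vfin] soc_pre_zero[where 's='s and 'k='k] by simp
next
  case (succ X)
  hence "Vfin \<subseteq> soc_pre X" using Vstar_range_iff[OF inf] subset_soc_pre by blast
  thus ?case by (rule submod_in_Vstar_range[OF inf submod_soc_pre])
next
  case (lim S)
  thus ?case unfolding Vstar_range_iff[OF inf] using supp_card_closed_Union by blast
qed

lemma Union_Vstar_cardSuc:
  fixes U :: "('s \<Rightarrow> 'k::field) set"
  assumes "supp_card_closed U" "Vfin \<subseteq> U"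
  shows "U = \<Union> (insert Vfin {Vstar (cardSuc |supp v| ) | v. v \<in> U \<and> infinite (supp v)})"
proof (intro equalityI subsetI)
  fix v :: "'s \<Rightarrow> 'k" assume "v \<in> U"
  moreover have "v \<in> Vstar (cardSuc |supp v| )"
    by (simp add: Vstar_cardSuc[OF card_of_Card_order] ordLeq_refl[OF card_of_Card_order])
  ultimately show "v \<in> \<Union> (insert Vfin {Vstar (cardSuc |supp v| ) | v. v \<in> U \<and> infinite (supp v)})"
    by (cases "finite (supp v)") (auto simp: Vfin_def)
next
  fix w :: "'s \<Rightarrow> 'k" assume "w \<in> \<Union> (insert Vfin {Vstar (cardSuc |supp v| ) | v. v \<in> U \<and> infinite (supp v)})"
  thus "w \<in> U" using assms unfolding supp_card_closed_def
    by (auto simp: Vstar_cardSuc[OF card_of_Card_order])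
qed

lemma Vfin_in_soc_filt: "Vfin \<in> soc_filt"
  using soc_filt.base soc_pre_zero by metis

lemma in_soc_filt_if_closed:
  fixes U :: "('s \<Rightarrow> 'k::field) set"
  assumes "supp_card_closed U" "Vfin \<subseteq> U"
    and "\<And>v. v \<in> U \<Longrightarrow> infinite (supp v) \<Longrightarrow> (Vstar (cardSuc |supp v| ) :: ('s \<Rightarrow> 'k) set) \<in> soc_filt"
  shows "U \<in> soc_filt"
proof -
  have "\<Union> (insert (Vfin :: ('s \<Rightarrow> 'k) set) {Vstar (cardSuc |supp v| ) | v. v \<in> U \<and> infinite (supp v)}) \<in> soc_filt"
    using assms(3) Vfin_in_soc_filt by (intro soc_filt.lim) auto
  thus ?thesis using Union_Vstar_cardSuc[OF assms(1,2)] by simp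
qed

text \<open>\<open>Vstar |A|\<close> is the union of \<open>Vfin\<close> and the terms \<open>Vstar (cardSuc |B|)\<close> with \<open>|B| <o |A|\<close>,
  and one more socle step leads to \<open>Vstar (cardSuc |A|)\<close>.\<close>
lemma Vstar_cardSuc_in_soc_filt:
  fixes A :: "'s set"
  assumes "infinite A"
  shows "(Vstar (cardSuc |A| ) :: ('s \<Rightarrow> 'k::field) set) \<in> soc_filt"
  using assms
proof (induction "|A|" arbitrary: A rule: wf_induct_rule[OF wf_ordLess])
  case (1 A)
  have IH: "(Vstar (cardSuc |supp v| ) :: ('s \<Rightarrow> 'k) set) \<in> soc_filt"
    if "v \<in> Vstar |A|" "infinite (supp v)" for v :: "'s \<Rightarrow> 'k"
    using that by (intro "1.hyps") (simp_all add: Vstar_eq)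
  have "Vfin \<subseteq> (Vstar |A| :: ('s \<Rightarrow> 'k) set)"
    using "1.prems" by (intro Vfin_subset_Vstar card_of_Card_order) (simp add: Field_card_of)
  hence "(Vstar |A| :: ('s \<Rightarrow> 'k) set) \<in> soc_filt"
    by (rule in_soc_filt_if_closed[OF supp_card_closed_Vstar _ IH])
  hence "soc_pre (Vstar |A| :: ('s \<Rightarrow> 'k) set) \<in> soc_filt" by (rule soc_filt.succ)
  moreover have "soc_pre (Vstar |A| :: ('s \<Rightarrow> 'k) set) = Vstar (cardSuc |A| )"
    using soc_pre_Vstar_card_of[OF "1.prems"] by (rule conjunct1)
  ultimately show ?case by simp
qed

lemma Vstar_range_subset_soc_filt:
  assumes "infinite (UNIV :: 's set)" "U \<in> (Vstar_range :: ('s \<Rightarrow> 'k::field) set set)"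
  shows "U \<in> soc_filt"
proof (rule in_soc_filt_if_closed)
  show "supp_card_closed U" "Vfin \<subseteq> U" using assms Vstar_range_iff by blast+
qed (rule Vstar_cardSuc_in_soc_filt)

theorem mainTheorem8:
  assumes "infinite (UNIV :: 's set)"
    and "alg_closed TYPE('k::field_char_0)"
  shows "soc_pre {\<lambda>_::'s. 0::'k} = {v. finite {i. v i \<noteq> 0}}
    \<and> (\<forall>\<beta> :: 's set rel. inf_card \<beta> \<and> (\<beta>, card_of (UNIV :: 's set)) \<in> ordLeq \<longrightarrow>
           soc_pre (Vstar \<beta> :: ('s \<Rightarrow> 'k) set) = Vstar (cardSuc \<beta>)
           \<and> rel_simple (Vstar \<beta> :: ('s \<Rightarrow> 'k) set) (Vstar (cardSuc \<beta>)))
    \<and> (soc_filt :: ('s \<Rightarrow> 'k) set set) =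
           {Vstar \<beta> | \<beta> :: 's set rel. inf_card \<beta> \<and> (\<beta>, cardSuc (card_of (UNIV :: 's set))) \<in> ordLeq}"
proof (intro conjI)
  show "soc_pre {\<lambda>_::'s. 0::'k} = {v. finite {i. v i \<noteq> 0}}"
    using soc_pre_zero[where 's='s and 'k='k] by (simp add: Vfin_def supp_def)
  show "\<forall>\<beta> :: 's set rel. inf_card \<beta> \<and> (\<beta>, card_of (UNIV :: 's set)) \<in> ordLeq \<longrightarrow>
           soc_pre (Vstar \<beta> :: ('s \<Rightarrow> 'k) set) = Vstar (cardSuc \<beta>)
           \<and> rel_simple (Vstar \<beta> :: ('s \<Rightarrow> 'k) set) (Vstar (cardSuc \<beta>))"
    unfolding inf_card_def using soc_pre_Vstar[where 's='s and 'k='k] by blast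
  show "(soc_filt :: ('s \<Rightarrow> 'k) set set) =
           {Vstar \<beta> | \<beta> :: 's set rel. inf_card \<beta> \<and> (\<beta>, cardSuc (card_of (UNIV :: 's set))) \<in> ordLeq}"
    using soc_filt_subset_Vstar_range[OF assms(1)] Vstar_range_subset_soc_filt[OF assms(1)]
    unfolding Vstar_range_def[symmetric] by blast
qed

end
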